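(* Let $p\ge1$, $j\ge1$ be integers, $\alpha\in D(A^p)$, and define for $\tau\ge0$ $$v_j(\tau)=\sum_{l=0}^{p-1}\frac{\tau^l}{(l+j)!}A^l\alpha+\tau^p\varphi_{p+j}(\tau A_0)A^p\alpha.$$ Then $v_j$ satisfies $$v_j'(\tau)=\Big(A-\frac{j}{\tau}\Big)v_j(\tau)+\frac{1}{(j-1)!\,\tau}\alpha\ (\tau>0),\qquad v_j(0)=\frac{1}{j!}\alpha,\qquad \partial v_j(\tau)=\sum_{l=0}^{p-1}\frac{\tau^l}{(l+j)!}\partial A^l\alpha.$$
   Context: $X$, $Y$ complex Banach spaces, $A:D(A)\subset X\to X$ linear with dense domain, $\partial:D(A)\to Y$ linear and onto, $\mathrm{Ker}(\partial)$ dense in $X$, and $A_0$, the restriction of $A$ to $D(A_0)=\mathrm{Ker}(\partial)$, generates a $C_0$-semigroup $e^{tA_0}$ of negative type. $\varphi_k(\tau A_0)=\tau^{-k}\int_0^\tau e^{(\tau-\theta)A_0}\theta^{k-1}/(k-1)!\,d\theta$ for $k\ge1$ (and $\varphi_k(0)=1/k!$). $D(A^p)$ denotes the domain of $A^p$. *)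

theory Defs
  imports "HOL-Analysis.Analysis"
begin

definition linear_on :: "'a::real_vector set \<Rightarrow> ('a \<Rightarrow> 'b::real_vector) \<Rightarrow> bool" where
  "linear_on D f \<longleftrightarrow> subspace D \<and>
     (\<forall>x\<in>D. \<forall>y\<in>D. f (x + y) = f x + f y) \<and>
     (\<forall>c. \<forall>x\<in>D. f (c *\<^sub>R x) = c *\<^sub>R f x)"

definition C0_semigroup :: "(real \<Rightarrow> 'a::banach \<Rightarrow> 'a) \<Rightarrow> bool" where
  "C0_semigroup T \<longleftrightarrow>
     (\<forall>t\<ge>0. bounded_linear (T t)) \<and>
     T 0 = id \<and>
     (\<forall>s\<ge>0. \<forall>t\<ge>0. T (s + t) = T s \<circ> T t) \<and>
     (\<forall>x. ((\<lambda>t. T t x) \<longlongrightarrow> x) (at_right 0))"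

definition generates :: "('a::banach \<Rightarrow> 'a) \<Rightarrow> 'a set \<Rightarrow> (real \<Rightarrow> 'a \<Rightarrow> 'a) \<Rightarrow> bool" where
  "generates B D T \<longleftrightarrow> C0_semigroup T \<and>
     (\<forall>x. x \<in> D \<longleftrightarrow> (\<exists>y. ((\<lambda>h. (1 / h) *\<^sub>R (T h x - x)) \<longlongrightarrow> y) (at_right 0))) \<and>
     (\<forall>x\<in>D. ((\<lambda>h. (1 / h) *\<^sub>R (T h x - x)) \<longlongrightarrow> B x) (at_right 0))"

definition negative_type :: "(real \<Rightarrow> 'a::banach \<Rightarrow> 'a) \<Rightarrow> bool" where
  "negative_type T \<longleftrightarrow> (\<exists>M \<omega>. \<omega> < 0 \<and> (\<forall>t\<ge>0. onorm (T t) \<le> M * exp (\<omega> * t)))"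

fun pow_dom :: "('a \<Rightarrow> 'a) \<Rightarrow> 'a set \<Rightarrow> nat \<Rightarrow> 'a set" where
  "pow_dom A DA 0 = UNIV"
| "pow_dom A DA (Suc n) = {x \<in> DA. A x \<in> pow_dom A DA n}"

text \<open>\<open>\<phi>_k(\<tau> A_0) x\<close> where T = e^{t A_0}.\<close>
definition phi_op :: "(real \<Rightarrow> 'a::banach \<Rightarrow> 'a) \<Rightarrow> nat \<Rightarrow> real \<Rightarrow> 'a \<Rightarrow> 'a" where
  "phi_op T k \<tau> x =
     (if \<tau> = 0 then (1 / fact k) *\<^sub>R x
      else (1 / \<tau> ^ k) *\<^sub>R
        integral {0..\<tau>} (\<lambda>\<theta>. (\<theta> ^ (k - 1) / fact (k - 1)) *\<^sub>R T (\<tau> - \<theta>) x))"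

end

theory Submission
  imports Defs
begin

text \<open>With \<open>m = p + j - 1\<close>, write \<open>v(\<tau>) = S(\<tau>) + \<tau>^-j U(\<tau>)\<close>, where
  \<open>S(\<tau>) = \<Sum>l<p. \<tau>^l/(l+j)! A^l \<alpha>\<close> and \<open>U(\<tau>) = \<integral>\<^sub>0\<^sup>\<tau> \<theta>^m/m! e^((\<tau>-\<theta>)A\<^sub>0) A^p \<alpha> d\<theta>\<close>.
  Although \<open>A^p \<alpha>\<close> need not lie in \<open>D(A\<^sub>0)\<close>, \<open>U(\<tau>)\<close> does: \<open>U\<close> is differentiable
  (expand the kernel binomially) and \<open>e^(hA\<^sub>0) U(\<tau>) = U(\<tau>+h) - \<integral>\<^sub>\<tau>\<^sup>\<tau>\<^sup>+\<^sup>h \<dots>\<close>, so the semigroup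
  difference quotients of \<open>U(\<tau>)\<close> converge. Hence \<open>U' = A U + \<tau>^m/m! A^p \<alpha>\<close> and \<open>\<partial>U = 0\<close>.
  Differentiating termwise, \<open>S\<close> satisfies the claimed equation up to the defect
  \<open>-\<tau>^(p-1)/(p-1+j)! A^p \<alpha>\<close>, which the inhomogeneity of \<open>\<tau>^-j U\<close> cancels exactly.\<close>

lemma linear_on_subspace: "linear_on D f \<Longrightarrow> subspace D"
  unfolding linear_on_def by blast

lemma linear_on_add: "linear_on D f \<Longrightarrow> x \<in> D \<Longrightarrow> y \<in> D \<Longrightarrow> f (x + y) = f x + f y"
  unfolding linear_on_def by blast

lemma linear_on_scaleR: "linear_on D f \<Longrightarrow> x \<in> D \<Longrightarrow> f (c *\<^sub>R x) = c *\<^sub>R f x"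
  unfolding linear_on_def by blast

lemma linear_on_scaleR_mem: "linear_on D f \<Longrightarrow> x \<in> D \<Longrightarrow> c *\<^sub>R x \<in> D"
  by (simp add: linear_on_subspace real_vector.subspace_scale)

lemma linear_on_add_mem: "linear_on D f \<Longrightarrow> x \<in> D \<Longrightarrow> y \<in> D \<Longrightarrow> x + y \<in> D"
  by (simp add: linear_on_subspace real_vector.subspace_add)

lemma linear_on_zero: "linear_on D f \<Longrightarrow> f 0 = 0"
  using linear_on_scaleR[of D f 0 0] by (simp add: linear_on_subspace real_vector.subspace_0)

lemma linear_on_sum_mem:
  "linear_on D f \<Longrightarrow> (\<And>i. i \<in> I \<Longrightarrow> z i \<in> D) \<Longrightarrow> (\<Sum>i\<in>I. c i *\<^sub>R z i) \<in> D"
  by (intro real_vector.subspace_sum linear_on_scaleR_mem linear_on_subspace) auto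

lemma linear_on_sum:
  assumes L: "linear_on D f" and "\<And>i. i \<in> I \<Longrightarrow> z i \<in> D"
  shows "f (\<Sum>i\<in>I. c i *\<^sub>R z i) = (\<Sum>i\<in>I. c i *\<^sub>R f (z i))"
  using assms(2)
proof (induction I rule: infinite_finite_induct)
  case (insert i I)
  then show ?case
    by (simp add: linear_on_add[OF L] linear_on_scaleR[OF L] linear_on_sum_mem[OF L]
        linear_on_scaleR_mem[OF L])
qed (simp_all add: linear_on_zero[OF L])

lemma pow_dom_funpow_mem: "x \<in> pow_dom A D n \<Longrightarrow> l < n \<Longrightarrow> (A ^^ l) x \<in> D"
proof (induction n arbitrary: x l)
  case (Suc n)
  then show ?case
    by (cases l) (auto simp: funpow_Suc_right simp del: funpow.simps)
qed simp

lemma negative_type_onorm_bounded: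
  assumes "negative_type T"
  obtains M where "\<And>t. t \<ge> 0 \<Longrightarrow> onorm (T t) \<le> M"
proof -
  obtain M \<omega> where "\<omega> < 0" and bound: "\<forall>t\<ge>0. onorm (T t) \<le> M * exp (\<omega> * t)"
    using assms unfolding negative_type_def by blast
  have "onorm (T t) \<le> max M 0" if "t \<ge> 0" for t
  proof -
    have "exp (\<omega> * t) \<le> 1"
      using \<open>\<omega> < 0\<close> that by (simp add: mult_nonpos_nonneg)
    then have "M * exp (\<omega> * t) \<le> max M 0"
      by (cases "M \<ge> 0") (auto simp: mult_left_le intro: mult_nonpos_nonneg)
    then show ?thesis using bound that by force
  qed
  then show ?thesis using that by blast
qed

lemma C0_semigroup_norm_diff_le:
  assumes C: "C0_semigroup T" and M: "\<And>t. t \<ge> 0 \<Longrightarrow> onorm (T t) \<le> M"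
    and "s \<ge> 0" "t \<ge> 0"
  shows "norm (T s x - T t x) \<le> M * norm (T \<bar>s - t\<bar> x - x)"
proof -
  have bl: "\<And>t. t \<ge> 0 \<Longrightarrow> bounded_linear (T t)"
    and comp: "\<And>s t. s \<ge> 0 \<Longrightarrow> t \<ge> 0 \<Longrightarrow> T (s + t) = T s \<circ> T t"
    using C unfolding C0_semigroup_def by auto
  have *: "norm (T a x - T b x) \<le> M * norm (T (a - b) x - x)"
    if "0 \<le> b" "b \<le> a" for a b
  proof -
    have "T a x - T b x = T b (T (a - b) x - x)"
      using comp[of b "a - b"] that bl[of b]
      by (simp add: linear_diff bounded_linear.linear)
    also have "norm \<dots> \<le> onorm (T b) * norm (T (a - b) x - x)"
      by (rule onorm[OF bl[OF \<open>0 \<le> b\<close>]])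
    also have "\<dots> \<le> M * norm (T (a - b) x - x)"
      using M[OF \<open>0 \<le> b\<close>] by (simp add: mult_right_mono)
    finally show ?thesis .
  qed
  show ?thesis
    using *[of t s] *[of s t] assms(3,4) by (cases "t \<le> s") (auto simp: norm_minus_commute)
qed

lemma C0_semigroup_continuous_on:
  assumes C: "C0_semigroup T" and M: "\<And>t. t \<ge> 0 \<Longrightarrow> onorm (T t) \<le> M"
  shows "continuous_on {0..} (\<lambda>s. T s x)"
  unfolding continuous_on_def
proof
  fix t :: real assume t: "t \<in> {0..}"
  have "((\<lambda>h. T h x - x) \<longlongrightarrow> 0) (at_right 0)"
    using C unfolding C0_semigroup_def by (simp add: LIM_zero)
  moreover have "filterlim (\<lambda>s. \<bar>s - t\<bar>) (at_right 0) (at t within {0..})"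
    unfolding filterlim_at
    by (auto simp: eventually_at_filter intro!: tendsto_eq_intros)
  ultimately have "((\<lambda>s. M * norm (T \<bar>s - t\<bar> x - x)) \<longlongrightarrow> 0) (at t within {0..})"
    using filterlim_compose tendsto_mult_right_zero tendsto_norm_zero by blast
  moreover have "\<forall>\<^sub>F s in at t within {0..}. norm (T s x - T t x) \<le> M * norm (T \<bar>s - t\<bar> x - x)"
    using t unfolding eventually_at_filter
    by (auto intro!: always_eventually C0_semigroup_norm_diff_le[OF C M])
  ultimately show "((\<lambda>s. T s x) \<longlongrightarrow> T t x) (at t within {0..})"
    by (subst LIM_zero_iff[symmetric]) (rule Lim_null_comparison)
qed

lemma has_vector_derivative_at_imp_quotient_tendsto:
  fixes f :: "real \<Rightarrow> 'a::real_normed_vector"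
  assumes "(f has_vector_derivative D) (at x)"
  shows "((\<lambda>h. (1 / h) *\<^sub>R (f (x + h) - f x)) \<longlongrightarrow> D) (at 0)"
proof -
  have "((\<lambda>h. norm (f (x + h) - f x - h *\<^sub>R D) / norm h) \<longlongrightarrow> 0) (at 0)"
    using assms unfolding has_vector_derivative_def has_derivative_at by simp
  moreover have "norm (f (x + h) - f x - h *\<^sub>R D) / norm h = norm ((1 / h) *\<^sub>R (f (x + h) - f x) - D)"
    if "h \<noteq> 0" for h
  proof -
    have "(1 / h) *\<^sub>R (f (x + h) - f x) - D = (1 / h) *\<^sub>R (f (x + h) - f x - h *\<^sub>R D)"
      using that by (simp add: algebra_simps)
    then show ?thesis by (simp add: divide_inverse mult.commute)
  qed
  then have "\<forall>\<^sub>F h in at 0.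
      norm (f (x + h) - f x - h *\<^sub>R D) / norm h = norm ((1 / h) *\<^sub>R (f (x + h) - f x) - D)"
    by (auto simp: eventually_at_filter)
  ultimately have "((\<lambda>h. norm ((1 / h) *\<^sub>R (f (x + h) - f x) - D)) \<longlongrightarrow> 0) (at 0)"
    using Lim_transform_eventually by fast
  then show ?thesis
    by (simp add: tendsto_norm_zero_iff LIM_zero_iff)
qed

lemma integral_reflect_ivl:
  fixes f :: "real \<Rightarrow> 'a::banach"
  shows "integral {0..t} (\<lambda>\<theta>. f (t - \<theta>)) = integral {0..t} f"
proof -
  have "integral {0..t} (\<lambda>\<theta>. f (t - \<theta>)) = integral {-t..0} (\<lambda>y. f (y + t))"
    using Henstock_Kurzweil_Integration.integral_reflect_real[where f="\<lambda>y. f (y + t)" and a="-t" and b=0]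
    by (simp add: uminus_add_conv_diff)
  also have "\<dots> = integral {0..t} f"
    using integral_shift_real_ivl[where f=f and a=0 and b=t and c=t] by simp
  finally show ?thesis .
qed

lemma continuous_on_reflect_kernel:
  fixes F :: "real \<Rightarrow> 'a::real_normed_vector" and g :: "real \<Rightarrow> real"
  assumes "continuous_on {0..} F" and "continuous_on UNIV g"
  shows "continuous_on {..t} (\<lambda>\<theta>. g \<theta> *\<^sub>R F (t - \<theta>))"
proof -
  have "continuous_on {..t} (\<lambda>\<theta>. F (t - \<theta>))"
    by (rule continuous_on_compose2[OF assms(1)]) (auto intro!: continuous_intros)
  then show ?thesis
    by (intro continuous_intros continuous_on_subset[OF assms(2)]) auto
qed

text \<open>Expanding \<open>(t - s)\<^sup>m\<close> binomially writes the convolution as a polynomial in \<open>t\<close> with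
  coefficients \<open>\<integral>\<^sub>0\<^sup>t (-s)\<^sup>k F s ds\<close>, each differentiable by the fundamental theorem of calculus.\<close>
lemma monomial_convolution_differentiable:
  fixes F :: "real \<Rightarrow> 'a::banach"
  assumes F: "continuous_on {0..} F" and \<tau>: "\<tau> > 0"
  shows "(\<lambda>t. integral {0..t} (\<lambda>\<theta>. \<theta> ^ m *\<^sub>R F (t - \<theta>))) differentiable (at \<tau>)"
proof -
  define H where "H = (\<lambda>k s. (- s) ^ (m - k) *\<^sub>R F s)"
  define W where "W = (\<lambda>t. \<Sum>k\<le>m. (real (m choose k) * t ^ k) *\<^sub>R integral {0..t} (H k))"
  have H: "continuous_on {0..} (H k)" for k
    unfolding H_def by (auto intro!: continuous_intros F)
  have expand: "W t = integral {0..t} (\<lambda>\<theta>. \<theta> ^ m *\<^sub>R F (t - \<theta>))" if "t > 0" for t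
  proof -
    have "integral {0..t} (\<lambda>\<theta>. \<theta> ^ m *\<^sub>R F (t - \<theta>)) = integral {0..t} (\<lambda>s. (t - s) ^ m *\<^sub>R F s)"
      using integral_reflect_ivl[where f="\<lambda>s. (t - s) ^ m *\<^sub>R F s" and t=t] by simp
    also have "\<dots> = integral {0..t} (\<lambda>s. \<Sum>k\<le>m. (real (m choose k) * t ^ k) *\<^sub>R H k s)"
    proof (rule integral_cong)
      fix s
      have "(t - s) ^ m = (\<Sum>k\<le>m. real (m choose k) * t ^ k * (- s) ^ (m - k))"
        using binomial_ring[of t "- s" m] by simp
      then show "(t - s) ^ m *\<^sub>R F s = (\<Sum>k\<le>m. (real (m choose k) * t ^ k) *\<^sub>R H k s)"
        by (simp add: H_def scaleR_sum_left)
    qed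
    also have "\<dots> = (\<Sum>k\<le>m. integral {0..t} (\<lambda>s. (real (m choose k) * t ^ k) *\<^sub>R H k s))"
      by (rule integral_sum) (auto intro!: integrable_continuous_real continuous_intros
          continuous_on_subset[OF H])
    also have "\<dots> = W t"
      unfolding W_def by simp
    finally show ?thesis by simp
  qed
  have "(\<lambda>t. integral {0..t} (H k)) differentiable (at \<tau>)" for k
  proof -
    have "((\<lambda>t. integral {0..t} (H k)) has_vector_derivative H k \<tau>) (at \<tau> within {0..\<tau>+1})"
      using \<tau> by (intro integral_has_vector_derivative continuous_on_subset[OF H]) auto
    then have "((\<lambda>t. integral {0..t} (H k)) has_vector_derivative H k \<tau>) (at \<tau> within {0<..<\<tau>+1})"
      by (rule has_vector_derivative_within_subset) auto
    then show ?thesis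
      using \<tau> at_within_open[of \<tau> "{0<..<\<tau>+1}"] by (auto intro: differentiableI_vector)
  qed
  then have "W differentiable (at \<tau>)"
    unfolding W_def by (intro differentiable_sum differentiable_scaleR) (auto intro!: derivative_intros)
  then show ?thesis
    by (rule differentiable_transform_within[OF _ \<tau> UNIV_I]) (simp add: expand dist_real_def)
qed

lemma tail_convolution_quotient_tendsto:
  fixes F :: "real \<Rightarrow> 'a::banach" and g :: "real \<Rightarrow> real"
  assumes F: "continuous_on {0..} F" and g: "continuous_on UNIV g"
  shows "((\<lambda>h. (1 / h) *\<^sub>R integral {\<tau>..\<tau>+h} (\<lambda>\<theta>. g \<theta> *\<^sub>R F (\<tau> + h - \<theta>))) \<longlongrightarrow> g \<tau> *\<^sub>R F 0)
           (at_right 0)"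
proof (rule tendstoI)
  fix e :: real assume e: "e > 0"
  define P where "P = (\<lambda>z::real \<times> real. g (fst z) *\<^sub>R F (snd z))"
  have "continuous_on (UNIV \<times> {0..}) P"
  proof -
    have "continuous_on (UNIV \<times> {0..}) (\<lambda>z::real \<times> real. F (snd z))"
      by (rule continuous_on_compose2[OF F]) (auto intro!: continuous_intros)
    moreover have "continuous_on (UNIV \<times> {0..}) (\<lambda>z::real \<times> real. g (fst z))"
      by (rule continuous_on_compose2[OF g]) (auto intro!: continuous_intros)
    ultimately show ?thesis
      unfolding P_def by (rule continuous_on_scaleR[rotated])
  qed
  then obtain d where "d > 0"
    and d: "\<And>z. z \<in> UNIV \<times> {0..} \<Longrightarrow> dist z (\<tau>, 0) < d \<Longrightarrow> dist (P z) (P (\<tau>, 0)) < e / 2"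
    using e unfolding continuous_on_iff by (metis half_gt_zero mem_Sigma_iff UNIV_I atLeast_iff order_refl)
  have "dist ((1 / h) *\<^sub>R integral {\<tau>..\<tau>+h} (\<lambda>\<theta>. g \<theta> *\<^sub>R F (\<tau> + h - \<theta>))) (g \<tau> *\<^sub>R F 0) < e"
    if h: "0 < h" "h < d" for h
  proof -
    define I where "I = integral {\<tau>..\<tau>+h} (\<lambda>\<theta>. g \<theta> *\<^sub>R F (\<tau> + h - \<theta>))"
    define K where "K = (\<lambda>\<theta>. g \<theta> *\<^sub>R F (\<tau> + h - \<theta>) - g \<tau> *\<^sub>R F 0)"
    have kernel: "continuous_on {\<tau>..\<tau>+h} (\<lambda>\<theta>. g \<theta> *\<^sub>R F (\<tau> + h - \<theta>))"
      by (rule continuous_on_subset[OF continuous_on_reflect_kernel[OF F g]]) auto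
    have "norm (K \<theta>) \<le> e / 2" if \<theta>: "\<theta> \<in> {\<tau>..\<tau>+h}" for \<theta>
    proof -
      have "dist (\<theta>, \<tau> + h - \<theta>) (\<tau>, 0) \<le> norm (\<theta> - \<tau>) + norm (\<tau> + h - \<theta>)"
        using norm_Pair_le[of "\<theta> - \<tau>" "\<tau> + h - \<theta>"] by (simp add: dist_norm)
      then have "dist (P (\<theta>, \<tau> + h - \<theta>)) (P (\<tau>, 0)) < e / 2"
        using \<theta> h by (intro d) auto
      then show ?thesis by (simp add: P_def K_def dist_norm)
    qed
    then have "norm (integral {\<tau>..\<tau>+h} K) \<le> e / 2 * (\<tau> + h - \<tau>)"
      using h unfolding K_def by (intro integral_bound continuous_intros kernel) auto
    moreover have "integral {\<tau>..\<tau>+h} K = I - h *\<^sub>R (g \<tau> *\<^sub>R F 0)"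
      using h unfolding K_def I_def
      by (subst integral_diff) (auto simp: integral_const_real intro: integrable_continuous_real kernel)
    ultimately have "norm (I - h *\<^sub>R (g \<tau> *\<^sub>R F 0)) / h \<le> e / 2"
      using h by (simp add: divide_le_eq mult.commute)
    moreover have "(1 / h) *\<^sub>R I - g \<tau> *\<^sub>R F 0 = (1 / h) *\<^sub>R (I - h *\<^sub>R (g \<tau> *\<^sub>R F 0))"
      using h by (simp add: scaleR_diff_right)
    then have "norm ((1 / h) *\<^sub>R I - g \<tau> *\<^sub>R F 0) = norm (I - h *\<^sub>R (g \<tau> *\<^sub>R F 0)) / h"
      using h by simp
    ultimately show ?thesis
      using e unfolding I_def dist_norm by linarith
  qed
  then show "\<forall>\<^sub>F h in at_right 0. dist ((1 / h) *\<^sub>R integral {\<tau>..\<tau>+h} (\<lambda>\<theta>. g \<theta> *\<^sub>R F (\<tau> + h - \<theta>)))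
      (g \<tau> *\<^sub>R F 0) < e"
    unfolding eventually_at_right_field using \<open>d > 0\<close> by blast
qed

definition semigroup_convolution :: "(real \<Rightarrow> 'a::banach \<Rightarrow> 'a) \<Rightarrow> nat \<Rightarrow> 'a \<Rightarrow> real \<Rightarrow> 'a" where
  "semigroup_convolution T m x t = integral {0..t} (\<lambda>\<theta>. (\<theta> ^ m / fact m) *\<^sub>R T (t - \<theta>) x)"

lemma phi_op_eq_semigroup_convolution:
  "\<tau> \<noteq> 0 \<Longrightarrow> phi_op T (Suc m) \<tau> x = (1 / \<tau> ^ Suc m) *\<^sub>R semigroup_convolution T m x \<tau>"
  unfolding phi_op_def semigroup_convolution_def by simp

lemma semigroup_convolution_shift:
  assumes C: "C0_semigroup T" and cont: "continuous_on {0..} (\<lambda>s. T s x)"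
    and "\<tau> \<ge> 0" "h \<ge> 0"
  shows "T h (semigroup_convolution T m x \<tau>)
    = semigroup_convolution T m x (\<tau> + h) - integral {\<tau>..\<tau>+h} (\<lambda>\<theta>. (\<theta> ^ m / fact m) *\<^sub>R T (\<tau> + h - \<theta>) x)"
proof -
  have Th: "bounded_linear (T h)" and comp: "\<And>s t. s \<ge> 0 \<Longrightarrow> t \<ge> 0 \<Longrightarrow> T (s + t) = T s \<circ> T t"
    using C \<open>h \<ge> 0\<close> unfolding C0_semigroup_def by auto
  have kernel: "continuous_on {0..t} (\<lambda>\<theta>. (\<theta> ^ m / fact m) *\<^sub>R T (t - \<theta>) x)" for t
    by (rule continuous_on_subset[OF continuous_on_reflect_kernel[OF cont]])
      (auto intro!: continuous_intros)
  have "T h (semigroup_convolution T m x \<tau>) = integral {0..\<tau>} (\<lambda>\<theta>. T h ((\<theta> ^ m / fact m) *\<^sub>R T (\<tau> - \<theta>) x))"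
    unfolding semigroup_convolution_def
    using integral_linear[OF integrable_continuous_real[OF kernel] Th] by (simp add: o_def)
  also have "\<dots> = integral {0..\<tau>} (\<lambda>\<theta>. (\<theta> ^ m / fact m) *\<^sub>R T (\<tau> + h - \<theta>) x)"
  proof (rule integral_cong)
    fix \<theta> assume "\<theta> \<in> {0..\<tau>}"
    then have "T h (T (\<tau> - \<theta>) x) = T (\<tau> + h - \<theta>) x"
      using comp[of h "\<tau> - \<theta>"] \<open>h \<ge> 0\<close> by (simp add: algebra_simps)
    then show "T h ((\<theta> ^ m / fact m) *\<^sub>R T (\<tau> - \<theta>) x) = (\<theta> ^ m / fact m) *\<^sub>R T (\<tau> + h - \<theta>) x"
      by (simp add: linear_scale[OF bounded_linear.linear[OF Th]])
  qed
  also have "\<dots> = semigroup_convolution T m x (\<tau> + h)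
      - integral {\<tau>..\<tau>+h} (\<lambda>\<theta>. (\<theta> ^ m / fact m) *\<^sub>R T (\<tau> + h - \<theta>) x)"
    unfolding semigroup_convolution_def
    using Henstock_Kurzweil_Integration.integral_combine[of 0 \<tau> "\<tau> + h",
        OF _ _ integrable_continuous_real[OF kernel]] assms(3,4)
    by (simp add: eq_diff_eq)
  finally show ?thesis .
qed

lemma semigroup_convolution_has_vector_derivative:
  assumes gen: "generates B D T" and neg: "negative_type T" and \<tau>: "\<tau> > 0"
  shows "semigroup_convolution T m x \<tau> \<in> D
    \<and> (semigroup_convolution T m x has_vector_derivative
         B (semigroup_convolution T m x \<tau>) + (\<tau> ^ m / fact m) *\<^sub>R x) (at \<tau>)"
proof -
  define U where "U = semigroup_convolution T m x"
  have C: "C0_semigroup T" and T0: "T 0 = id"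
    and dom: "\<And>y. y \<in> D \<longleftrightarrow> (\<exists>z. ((\<lambda>h. (1 / h) *\<^sub>R (T h y - y)) \<longlongrightarrow> z) (at_right 0))"
    and gen_lim: "\<And>y. y \<in> D \<Longrightarrow> ((\<lambda>h. (1 / h) *\<^sub>R (T h y - y)) \<longlongrightarrow> B y) (at_right 0)"
    using gen unfolding generates_def C0_semigroup_def by auto
  obtain M where "\<And>t. t \<ge> 0 \<Longrightarrow> onorm (T t) \<le> M"
    using negative_type_onorm_bounded[OF neg] by blast
  then have cont: "continuous_on {0..} (\<lambda>s. T s x)"
    by (rule C0_semigroup_continuous_on[OF C])
  have "U = (\<lambda>t. integral {0..t} (\<lambda>\<theta>. \<theta> ^ m *\<^sub>R ((1 / fact m) *\<^sub>R T (t - \<theta>) x)))"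
    unfolding U_def semigroup_convolution_def by (simp add: divide_inverse mult.commute)
  moreover have "\<dots> differentiable (at \<tau>)"
    by (rule monomial_convolution_differentiable[OF _ \<tau>]) (intro continuous_intros cont)
  ultimately obtain U' where U': "(U has_vector_derivative U') (at \<tau>)"
    using vector_derivative_works by blast
  have "((\<lambda>h. (1 / h) *\<^sub>R (U (\<tau> + h) - U \<tau>)) \<longlongrightarrow> U') (at_right 0)"
    using has_vector_derivative_at_imp_quotient_tendsto[OF U'] by (rule filterlim_mono) (auto simp: at_le)
  moreover have "((\<lambda>h. (1 / h) *\<^sub>R integral {\<tau>..\<tau>+h} (\<lambda>\<theta>. (\<theta> ^ m / fact m) *\<^sub>R T (\<tau> + h - \<theta>) x))
      \<longlongrightarrow> (\<tau> ^ m / fact m) *\<^sub>R x) (at_right 0)"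
    using tail_convolution_quotient_tendsto[OF cont, of "\<lambda>\<theta>. \<theta> ^ m / fact m" \<tau>] T0
    by (simp add: continuous_intros)
  ultimately have "((\<lambda>h. (1 / h) *\<^sub>R (U (\<tau> + h) - U \<tau>)
        - (1 / h) *\<^sub>R integral {\<tau>..\<tau>+h} (\<lambda>\<theta>. (\<theta> ^ m / fact m) *\<^sub>R T (\<tau> + h - \<theta>) x))
      \<longlongrightarrow> U' - (\<tau> ^ m / fact m) *\<^sub>R x) (at_right 0)"
    by (rule tendsto_diff)
  moreover have "\<forall>\<^sub>F h in at_right 0. (1 / h) *\<^sub>R (U (\<tau> + h) - U \<tau>)
        - (1 / h) *\<^sub>R integral {\<tau>..\<tau>+h} (\<lambda>\<theta>. (\<theta> ^ m / fact m) *\<^sub>R T (\<tau> + h - \<theta>) x)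
      = (1 / h) *\<^sub>R (T h (U \<tau>) - U \<tau>)"
    using \<tau> unfolding eventually_at_right_field U_def
    by (auto simp: semigroup_convolution_shift[OF C cont] algebra_simps intro!: exI[of _ 1])
  ultimately have lim: "((\<lambda>h. (1 / h) *\<^sub>R (T h (U \<tau>) - U \<tau>)) \<longlongrightarrow> U' - (\<tau> ^ m / fact m) *\<^sub>R x) (at_right 0)"
    by (rule Lim_transform_eventually)
  then have "U \<tau> \<in> D"
    using dom by blast
  moreover have "B (U \<tau>) = U' - (\<tau> ^ m / fact m) *\<^sub>R x"
    using tendsto_unique[OF trivial_limit_at_right_real gen_lim[OF \<open>U \<tau> \<in> D\<close>] lim] .
  ultimately show ?thesis
    using U' unfolding U_def by simp
qed

lemma power_over_fact_coeff_step:
  fixes \<tau> :: real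
  assumes "\<tau> \<noteq> 0"
  shows "real (Suc q) * \<tau> ^ q / fact (Suc q + j) - \<tau> ^ q / fact (q + j)
    = - (real j / \<tau>) * (\<tau> ^ Suc q / fact (Suc q + j))"
proof -
  define F :: real where "F = fact (q + j)"
  define N :: real where "N = real (Suc q + j)"
  have fact_eq: "fact (Suc q + j) = N * F" and "F > 0" and "N > 0"
    unfolding F_def N_def by simp_all
  have "real (Suc q) * \<tau> ^ q / (N * F) - \<tau> ^ q / F = (real (Suc q) - N) * \<tau> ^ q / (N * F)"
    using \<open>F > 0\<close> \<open>N > 0\<close> by (simp add: field_simps)
  also have "\<dots> = - (real j / \<tau>) * (\<tau> ^ Suc q / (N * F))"
    using assms by (simp add: N_def)
  finally show ?thesis
    unfolding fact_eq F_def .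
qed

definition phi_partial_sum :: "nat \<Rightarrow> nat \<Rightarrow> (nat \<Rightarrow> 'a::real_vector) \<Rightarrow> real \<Rightarrow> 'a" where
  "phi_partial_sum j p a t = (\<Sum>l<p. (t ^ l / fact (l + j)) *\<^sub>R a l)"

lemma phi_partial_sum_at_0: "phi_partial_sum j (Suc q) a 0 = (1 / fact j) *\<^sub>R a 0"
  unfolding phi_partial_sum_def by (simp add: sum.lessThan_Suc_shift del: sum.lessThan_Suc)

lemma phi_partial_sum_derivative_identity:
  fixes a :: "nat \<Rightarrow> 'a::real_vector"
  assumes \<tau>: "\<tau> \<noteq> 0" and j: "j \<ge> 1"
  shows "(\<Sum>l<Suc q. (real l * \<tau> ^ (l - 1) / fact (l + j)) *\<^sub>R a l) + (\<tau> ^ q / fact (q + j)) *\<^sub>R a (Suc q)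
    = phi_partial_sum j (Suc q) (\<lambda>l. a (Suc l)) \<tau> - (real j / \<tau>) *\<^sub>R phi_partial_sum j (Suc q) a \<tau>
      + (1 / (fact (j - 1) * \<tau>)) *\<^sub>R a 0"
proof (induction q)
  case 0
  have "fact j = real j * fact (j - 1)"
    using j by (simp add: fact_reduce)
  then have "real j / \<tau> * (1 / fact j) = 1 / (fact (j - 1) * \<tau>)"
    using j \<tau> by (simp add: field_simps)
  then show ?case
    by (simp add: phi_partial_sum_def)
next
  case (Suc q)
  let ?d = "\<lambda>l. real l * \<tau> ^ (l - 1) / fact (l + j)" and ?r = "\<lambda>l. \<tau> ^ l / fact (l + j)"
  have "(\<Sum>l<Suc (Suc q). ?d l *\<^sub>R a l) + ?r (Suc q) *\<^sub>R a (Suc (Suc q))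
      = ((\<Sum>l<Suc q. ?d l *\<^sub>R a l) + ?r q *\<^sub>R a (Suc q))
        + (real (Suc q) * \<tau> ^ q / fact (Suc q + j) - \<tau> ^ q / fact (q + j)) *\<^sub>R a (Suc q)
        + ?r (Suc q) *\<^sub>R a (Suc (Suc q))"
    by (simp add: algebra_simps)
  also have "\<dots> = phi_partial_sum j (Suc (Suc q)) (\<lambda>l. a (Suc l)) \<tau>
      - (real j / \<tau>) *\<^sub>R phi_partial_sum j (Suc (Suc q)) a \<tau> + (1 / (fact (j - 1) * \<tau>)) *\<^sub>R a 0"
    by (simp only: Suc.IH power_over_fact_coeff_step[OF \<tau>]) (simp add: phi_partial_sum_def algebra_simps)
  finally show ?case .
qed

lemma phi_partial_sum_has_vector_derivative:
  fixes a :: "nat \<Rightarrow> 'a::real_normed_vector"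
  assumes \<tau>: "\<tau> \<noteq> 0" and j: "j \<ge> 1"
  shows "(phi_partial_sum j (Suc q) a has_vector_derivative
      phi_partial_sum j (Suc q) (\<lambda>l. a (Suc l)) \<tau> - (real j / \<tau>) *\<^sub>R phi_partial_sum j (Suc q) a \<tau>
      + (1 / (fact (j - 1) * \<tau>)) *\<^sub>R a 0 - (\<tau> ^ q / fact (q + j)) *\<^sub>R a (Suc q)) (at \<tau>)"
proof -
  have "(phi_partial_sum j (Suc q) a has_vector_derivative
      (\<Sum>l<Suc q. (real l * \<tau> ^ (l - 1) / fact (l + j)) *\<^sub>R a l)) (at \<tau>)"
    unfolding phi_partial_sum_def[abs_def]
    by (intro has_vector_derivative_sum) (auto intro!: derivative_eq_intros)
  moreover have "(\<Sum>l<Suc q. (real l * \<tau> ^ (l - 1) / fact (l + j)) *\<^sub>R a l)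
      = phi_partial_sum j (Suc q) (\<lambda>l. a (Suc l)) \<tau> - (real j / \<tau>) *\<^sub>R phi_partial_sum j (Suc q) a \<tau>
        + (1 / (fact (j - 1) * \<tau>)) *\<^sub>R a 0 - (\<tau> ^ q / fact (q + j)) *\<^sub>R a (Suc q)"
    using phi_partial_sum_derivative_identity[OF assms] by (rule eq_diff_eq[THEN iffD2])
  ultimately show ?thesis
    by (simp only:)
qed

lemma linear_on_phi_partial_sum:
  assumes "linear_on D f" and "\<And>l. l < p \<Longrightarrow> a l \<in> D"
  shows "phi_partial_sum j p a t \<in> D"
    and "f (phi_partial_sum j p a t) = phi_partial_sum j p (\<lambda>l. f (a l)) t"
  unfolding phi_partial_sum_def
  by (auto intro: linear_on_sum_mem[OF assms(1)] linear_on_sum[OF assms(1)] assms(2))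

lemma has_vector_derivative_add_inverse_power_scaled:
  fixes S U :: "real \<Rightarrow> 'a::real_normed_vector"
  assumes L: "linear_on D L" and \<tau>: "\<tau> > 0" and "S \<tau> \<in> D" "U \<tau> \<in> D"
    and S: "(S has_vector_derivative L (S \<tau>) - (real j / \<tau>) *\<^sub>R S \<tau> + c - (\<tau> ^ q / fact (q + j)) *\<^sub>R y) (at \<tau>)"
    and U: "(U has_vector_derivative L (U \<tau>) + (\<tau> ^ (q + j) / fact (q + j)) *\<^sub>R y) (at \<tau>)"
  shows "((\<lambda>t. S t + (1 / t ^ j) *\<^sub>R U t) has_vector_derivative
      L (S \<tau> + (1 / \<tau> ^ j) *\<^sub>R U \<tau>) - (real j / \<tau>) *\<^sub>R (S \<tau> + (1 / \<tau> ^ j) *\<^sub>R U \<tau>) + c) (at \<tau>)"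
proof -
  have "((\<lambda>t. 1 / t ^ j) has_real_derivative - (real j / \<tau>) * (1 / \<tau> ^ j)) (at \<tau>)"
  proof -
    have "((\<lambda>t. 1 / t ^ j) has_real_derivative - (real j * \<tau> ^ (j - 1)) / (\<tau> ^ j * \<tau> ^ j)) (at \<tau>)"
      using \<tau> by (auto intro!: derivative_eq_intros)
    moreover have "- (real j * \<tau> ^ (j - 1)) / (\<tau> ^ j * \<tau> ^ j) = - (real j / \<tau>) * (1 / \<tau> ^ j)"
      using \<tau> by (cases j) (auto simp: field_simps)
    ultimately show ?thesis by simp
  qed
  from has_vector_derivative_add[OF S has_vector_derivative_scaleR[OF this U]]
  show ?thesis
    using \<tau> assms(3,4)
    by (simp add: linear_on_add[OF L] linear_on_scaleR[OF L] linear_on_scaleR_mem[OF L]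
        power_add algebra_simps)
qed

theorem lemma2:
  fixes A :: "'a::banach \<Rightarrow> 'a" and DA :: "'a set"
    and bd :: "'a \<Rightarrow> 'b::banach"
    and T :: "real \<Rightarrow> 'a \<Rightarrow> 'a"
    and p j :: nat and \<alpha> :: 'a
    and v :: "real \<Rightarrow> 'a"
  assumes A_lin: "linear_on DA A"
    and A_dense: "closure DA = UNIV"
    and bd_lin: "linear_on DA bd"
    and bd_onto: "bd ` DA = UNIV"
    and ker_dense: "closure {x \<in> DA. bd x = 0} = UNIV"
    and gen: "generates A {x \<in> DA. bd x = 0} T"
    and neg: "negative_type T"
    and p: "p \<ge> 1" and j: "j \<ge> 1"
    and \<alpha>: "\<alpha> \<in> pow_dom A DA p"
    and v_def: "\<And>\<tau>. \<tau> \<ge> 0 \<Longrightarrow> v \<tau> =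
        (\<Sum>l<p. (\<tau> ^ l / fact (l + j)) *\<^sub>R (A ^^ l) \<alpha>)
        + (\<tau> ^ p) *\<^sub>R phi_op T (p + j) \<tau> ((A ^^ p) \<alpha>)"
  shows "(\<forall>\<tau>>0. v \<tau> \<in> DA \<and>
           (v has_vector_derivative
              (A (v \<tau>) - (real j / \<tau>) *\<^sub>R v \<tau> + (1 / (fact (j - 1) * \<tau>)) *\<^sub>R \<alpha>)) (at \<tau>))
       \<and> v 0 = (1 / fact j) *\<^sub>R \<alpha>
       \<and> (\<forall>\<tau>\<ge>0. v \<tau> \<in> DA \<and>
           bd (v \<tau>) = (\<Sum>l<p. (\<tau> ^ l / fact (l + j)) *\<^sub>R bd ((A ^^ l) \<alpha>)))"
proof -
  obtain q where q: "p = Suc q"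
    using p by (cases p) auto
  define a where "a = (\<lambda>l. (A ^^ l) \<alpha>)"
  define S where "S = phi_partial_sum j p a"
  define U where "U = semigroup_convolution T (q + j) (a p)"
  have a_dom: "a l \<in> DA" if "l < p" for l
    unfolding a_def using pow_dom_funpow_mem[OF \<alpha> that] .
  have S: "S t \<in> DA" "A (S t) = phi_partial_sum j p (\<lambda>l. a (Suc l)) t"
    "bd (S t) = phi_partial_sum j p (\<lambda>l. bd (a l)) t" for t
  proof -
    have "A (a l) = a (Suc l)" for l
      by (simp add: a_def)
    then show "S t \<in> DA" "A (S t) = phi_partial_sum j p (\<lambda>l. a (Suc l)) t"
      "bd (S t) = phi_partial_sum j p (\<lambda>l. bd (a l)) t"
      unfolding S_def using linear_on_phi_partial_sum[OF A_lin a_dom] linear_on_phi_partial_sum[OF bd_lin a_dom]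
      by simp_all
  qed
  have U: "U \<tau> \<in> DA" "bd (U \<tau>) = 0"
    "(U has_vector_derivative A (U \<tau>) + (\<tau> ^ (q + j) / fact (q + j)) *\<^sub>R a p) (at \<tau>)" if "\<tau> > 0" for \<tau>
    using semigroup_convolution_has_vector_derivative[OF gen neg that] unfolding U_def by auto
  have v_split: "v \<tau> = S \<tau> + (1 / \<tau> ^ j) *\<^sub>R U \<tau>" if "\<tau> > 0" for \<tau>
    using v_def[of \<tau>] phi_op_eq_semigroup_convolution[of \<tau> T "q + j" "a p"] that
    by (simp add: S_def U_def phi_partial_sum_def a_def q power_add)
  have v0: "v 0 = S 0"
    using v_def[of 0] p by (simp add: S_def phi_partial_sum_def a_def)
  have v_dom: "v \<tau> \<in> DA \<and> bd (v \<tau>) = phi_partial_sum j p (\<lambda>l. bd (a l)) \<tau>" if "\<tau> \<ge> 0" for \<tau>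
  proof (cases "\<tau> = 0")
    case False
    then show ?thesis
      using that U[of \<tau>] S[of \<tau>] v_split[of \<tau>]
      by (simp add: linear_on_add_mem[OF A_lin] linear_on_scaleR_mem[OF A_lin]
          linear_on_add[OF bd_lin] linear_on_scaleR[OF bd_lin])
  qed (use v0 S in simp)
  have "(v has_vector_derivative
      A (v \<tau>) - (real j / \<tau>) *\<^sub>R v \<tau> + (1 / (fact (j - 1) * \<tau>)) *\<^sub>R \<alpha>) (at \<tau>)" if "\<tau> > 0" for \<tau>
  proof -
    have "(S has_vector_derivative A (S \<tau>) - (real j / \<tau>) *\<^sub>R S \<tau> + (1 / (fact (j - 1) * \<tau>)) *\<^sub>R \<alpha>
        - (\<tau> ^ q / fact (q + j)) *\<^sub>R a p) (at \<tau>)"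
      using phi_partial_sum_has_vector_derivative[of \<tau> j q a] that j S(2)
      by (simp add: S_def q a_def)
    from has_vector_derivative_add_inverse_power_scaled[OF A_lin that S(1) U(1)[OF that] this U(3)[OF that]]
    show ?thesis
      unfolding v_split[OF that, symmetric]
      by (rule has_vector_derivative_transform_within_open[where S="{0<..}"]) (use that v_split in auto)
  qed
  moreover have "v 0 = (1 / fact j) *\<^sub>R \<alpha>"
    using v0 phi_partial_sum_at_0[of j q a] by (simp add: S_def q a_def)
  ultimately show ?thesis
    using v_dom by (simp add: phi_partial_sum_def a_def)
qed

end
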